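(* Let $M$ be a regular $po$-$\Gamma$-semigroup. Then for every fuzzy subset $f$ of $M$ and every fuzzy left ideal $g$ of $M$, we have $f\wedge g\preceq f\circ g$.
   Context: Let $M$ and $\Gamma$ be nonempty sets with a map $M\times\Gamma\times M\to M$, $(a,\gamma,b)\mapsto a\gamma b$, satisfying $(a\gamma b)\mu c=a\gamma(b\mu c)$ for all $a,b,c\in M$, $\gamma,\mu\in\Gamma$. A $po$-$\Gamma$-semigroup is such an $M$ with a partial order $\le$ such that $a\le b$ implies $a\gamma c\le b\gamma c$ and $c\gamma a\le c\gamma b$ for all $c\in M$, $\gamma\in\Gamma$. For $H\subseteq M$, $(H]=\{t\in M: t\le h \text{ for some } h\in H\}$; $a\Gamma M\Gamma a=\{a\gamma x\mu a: x\in M,\gamma,\mu\in\Gamma\}$. $M$ is regular if $a\in(a\Gamma M\Gamma a]$ for every $a\in M$. A fuzzy subset of $M$ is a map $M\to[0,1]$. For $a\in M$ let $A_a=\{(y,z)\in M\times M: a\le y\gamma z \text{ for some }\gamma\in\Gamma\}$. $(f\circ g)(a)=\bigvee_{(y,z)\in A_a}\min\{f(y),g(z)\}$ if $A_a\ne\emptyset$, and $0$ otherwise. $(f\wedge g)(a)=\min\{f(a),g(a)\}$; $f\preceq g$ means $f(a)\le g(a)$ for all $a$. A fuzzy left ideal is a fuzzy subset $g$ with $g(x\gamma y)\ge g(y)$ for all $x,y\in M,\gamma\in\Gamma$, and $x\le y\Rightarrow g(x)\ge g(y)$. *)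

theory Defs
  imports Main "HOL.Real"
begin

definition gamma_semigroup :: "'a set \<Rightarrow> 'g set \<Rightarrow> ('a \<Rightarrow> 'g \<Rightarrow> 'a \<Rightarrow> 'a) \<Rightarrow> bool" where
  "gamma_semigroup M G op \<longleftrightarrow> M \<noteq> {} \<and> G \<noteq> {} \<and>
     (\<forall>a\<in>M. \<forall>g\<in>G. \<forall>b\<in>M. op a g b \<in> M) \<and>
     (\<forall>a\<in>M. \<forall>b\<in>M. \<forall>c\<in>M. \<forall>g\<in>G. \<forall>m\<in>G. op (op a g b) m c = op a g (op b m c))"

definition partial_order_on_carrier :: "'a set \<Rightarrow> ('a \<Rightarrow> 'a \<Rightarrow> bool) \<Rightarrow> bool" where
  "partial_order_on_carrier M le \<longleftrightarrow>
     (\<forall>a\<in>M. le a a) \<and>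
     (\<forall>a\<in>M. \<forall>b\<in>M. le a b \<and> le b a \<longrightarrow> a = b) \<and>
     (\<forall>a\<in>M. \<forall>b\<in>M. \<forall>c\<in>M. le a b \<and> le b c \<longrightarrow> le a c)"

definition po_gamma_semigroup ::
  "'a set \<Rightarrow> 'g set \<Rightarrow> ('a \<Rightarrow> 'g \<Rightarrow> 'a \<Rightarrow> 'a) \<Rightarrow> ('a \<Rightarrow> 'a \<Rightarrow> bool) \<Rightarrow> bool" where
  "po_gamma_semigroup M G op le \<longleftrightarrow> gamma_semigroup M G op \<and> partial_order_on_carrier M le \<and>
     (\<forall>a\<in>M. \<forall>b\<in>M. \<forall>c\<in>M. \<forall>g\<in>G. le a b \<longrightarrow> le (op a g c) (op b g c) \<and> le (op c g a) (op c g b))"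

definition down_closure :: "'a set \<Rightarrow> ('a \<Rightarrow> 'a \<Rightarrow> bool) \<Rightarrow> 'a set \<Rightarrow> 'a set" where
  "down_closure M le H = {t \<in> M. \<exists>h\<in>H. le t h}"

definition aGMGa :: "'a set \<Rightarrow> 'g set \<Rightarrow> ('a \<Rightarrow> 'g \<Rightarrow> 'a \<Rightarrow> 'a) \<Rightarrow> 'a \<Rightarrow> 'a set" where
  "aGMGa M G op a = {op (op a g x) m a | x g m. x \<in> M \<and> g \<in> G \<and> m \<in> G}"

definition regular_po_gamma ::
  "'a set \<Rightarrow> 'g set \<Rightarrow> ('a \<Rightarrow> 'g \<Rightarrow> 'a \<Rightarrow> 'a) \<Rightarrow> ('a \<Rightarrow> 'a \<Rightarrow> bool) \<Rightarrow> bool" where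
  "regular_po_gamma M G op le \<longleftrightarrow> (\<forall>a\<in>M. a \<in> down_closure M le (aGMGa M G op a))"

text \<open>Fuzzy subsets: maps M \<rightarrow> [0,1] (values outside M are irrelevant).\<close>
definition fuzzy_subset :: "'a set \<Rightarrow> ('a \<Rightarrow> real) \<Rightarrow> bool" where
  "fuzzy_subset M f \<longleftrightarrow> (\<forall>x\<in>M. 0 \<le> f x \<and> f x \<le> 1)"

definition A_set :: "'a set \<Rightarrow> 'g set \<Rightarrow> ('a \<Rightarrow> 'g \<Rightarrow> 'a \<Rightarrow> 'a) \<Rightarrow> ('a \<Rightarrow> 'a \<Rightarrow> bool) \<Rightarrow> 'a \<Rightarrow> ('a \<times> 'a) set" where
  "A_set M G op le a = {(y, z). y \<in> M \<and> z \<in> M \<and> (\<exists>g\<in>G. le a (op y g z))}"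

definition fuzzy_comp ::
  "'a set \<Rightarrow> 'g set \<Rightarrow> ('a \<Rightarrow> 'g \<Rightarrow> 'a \<Rightarrow> 'a) \<Rightarrow> ('a \<Rightarrow> 'a \<Rightarrow> bool) \<Rightarrow> ('a \<Rightarrow> real) \<Rightarrow> ('a \<Rightarrow> real) \<Rightarrow> 'a \<Rightarrow> real" where
  "fuzzy_comp M G op le f g a =
     (if A_set M G op le a \<noteq> {}
      then Sup ((\<lambda>(y, z). min (f y) (g z)) ` A_set M G op le a)
      else 0)"

definition fuzzy_min :: "('a \<Rightarrow> real) \<Rightarrow> ('a \<Rightarrow> real) \<Rightarrow> 'a \<Rightarrow> real" where
  "fuzzy_min f g a = min (f a) (g a)"

definition fuzzy_le :: "'a set \<Rightarrow> ('a \<Rightarrow> real) \<Rightarrow> ('a \<Rightarrow> real) \<Rightarrow> bool" where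
  "fuzzy_le M f g \<longleftrightarrow> (\<forall>a\<in>M. f a \<le> g a)"

definition fuzzy_left_ideal ::
  "'a set \<Rightarrow> 'g set \<Rightarrow> ('a \<Rightarrow> 'g \<Rightarrow> 'a \<Rightarrow> 'a) \<Rightarrow> ('a \<Rightarrow> 'a \<Rightarrow> bool) \<Rightarrow> ('a \<Rightarrow> real) \<Rightarrow> bool" where
  "fuzzy_left_ideal M G op le g \<longleftrightarrow> fuzzy_subset M g \<and>
     (\<forall>x\<in>M. \<forall>y\<in>M. \<forall>c\<in>G. g (op x c y) \<ge> g y) \<and>
     (\<forall>x\<in>M. \<forall>y\<in>M. le x y \<longrightarrow> g x \<ge> g y)"

end

theory Submission
  imports Defs
begin

text \<open>Regularity gives \<open>a \<le> a\<gamma>x\<mu>a = a\<gamma>(x\<mu>a)\<close>, so \<open>(a, x\<mu>a)\<close> is a factorisation of \<open>a\<close>;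
  since \<open>g\<close> is a fuzzy left ideal, \<open>g(x\<mu>a) \<ge> g a\<close>, and this single term of the
  supremum defining \<open>(f \<circ> g)(a)\<close> already dominates \<open>min (f a) (g a)\<close>.\<close>

lemma fuzzy_comp_ge_factor:
  assumes "fuzzy_subset M f" and "(y, z) \<in> A_set M G op le a"
  shows "min (f y) (g z) \<le> fuzzy_comp M G op le f g a"
proof -
  let ?S = "(\<lambda>(y, z). min (f y) (g z)) ` A_set M G op le a"
  have "bdd_above ?S"
  proof
    fix s assume "s \<in> ?S"
    with assms(1) show "s \<le> 1"
      unfolding A_set_def fuzzy_subset_def by force
  qed
  moreover have "min (f y) (g z) \<in> ?S" using assms(2) by force
  ultimately have "min (f y) (g z) \<le> Sup ?S" by (rule cSup_upper[rotated])
  with assms(2) show ?thesis unfolding fuzzy_comp_def by auto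
qed

lemma regular_left_factor:
  assumes "gamma_semigroup M G op" and "regular_po_gamma M G op le" and "a \<in> M"
  obtains x m where "x \<in> M" "m \<in> G" "(a, op x m a) \<in> A_set M G op le a"
proof -
  obtain x c m where x: "x \<in> M" "c \<in> G" "m \<in> G" and le_a: "le a (op (op a c x) m a)"
    using assms(2,3) unfolding regular_po_gamma_def down_closure_def aGMGa_def by blast
  have "op x m a \<in> M" and "op (op a c x) m a = op a c (op x m a)"
    using assms(1,3) x unfolding gamma_semigroup_def by blast+
  with x le_a assms(3) have "(a, op x m a) \<in> A_set M G op le a"
    unfolding A_set_def by auto
  with x(1,3) show ?thesis by (rule that)
qed

theorem lemma9:
  fixes M :: "'a set" and G :: "'g set" and op :: "'a \<Rightarrow> 'g \<Rightarrow> 'a \<Rightarrow> 'a"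
    and le :: "'a \<Rightarrow> 'a \<Rightarrow> bool"
  assumes "po_gamma_semigroup M G op le"
    and "regular_po_gamma M G op le"
  shows "\<forall>f g. fuzzy_subset M f \<longrightarrow> fuzzy_left_ideal M G op le g \<longrightarrow>
           fuzzy_le M (fuzzy_min f g) (fuzzy_comp M G op le f g)"
proof (intro allI impI)
  fix f g assume f: "fuzzy_subset M f" and g: "fuzzy_left_ideal M G op le g"
  have semigroup: "gamma_semigroup M G op"
    using assms(1) unfolding po_gamma_semigroup_def by blast
  show "fuzzy_le M (fuzzy_min f g) (fuzzy_comp M G op le f g)"
    unfolding fuzzy_le_def
  proof
    fix a assume a: "a \<in> M"
    obtain x m where x: "x \<in> M" "m \<in> G" and factor: "(a, op x m a) \<in> A_set M G op le a"
      using regular_left_factor[OF semigroup assms(2) a] .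
    have "g a \<le> g (op x m a)" using g x a unfolding fuzzy_left_ideal_def by blast
    then have "fuzzy_min f g a \<le> min (f a) (g (op x m a))"
      unfolding fuzzy_min_def by linarith
    also have "\<dots> \<le> fuzzy_comp M G op le f g a"
      using f factor by (rule fuzzy_comp_ge_factor)
    finally show "fuzzy_min f g a \<le> fuzzy_comp M G op le f g a" .
  qed
qed

end
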